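(* For every $0<\alpha\le 1$ the space $g^\alpha_\alpha(\mathbb R^d_+)$ is trivial, i.e. $g^\alpha_\alpha(\mathbb R^d_+)=\{0\}$.
   Context: $\mathbb R^d_+=(0,\infty)^d$. Multi-index notation: for $k,p\in\mathbb N_0^d$, $|k|=k_1+\dots+k_d$, $x^{(p+k)/2}=\prod_j x_j^{(p_j+k_j)/2}$, $k^{(\alpha/2)k}=\prod_j k_j^{(\alpha/2)k_j}$ with $0^0=1$, $\partial^p=\partial_{x_1}^{p_1}\cdots\partial_{x_d}^{p_d}$. $\mathcal S(\mathbb R^d_+)$ is the space of $f\in C^\infty(\mathbb R^d_+)$ all of whose derivatives extend continuously to $[0,\infty)^d$ and satisfy $\sup_{x\in\mathbb R^d_+}x^\beta|\partial^\gamma f(x)|<\infty$ for all $\beta,\gamma\in\mathbb N_0^d$. For $\alpha>0$, $A>0$, $g^{\alpha,A}_{\alpha,A}(\mathbb R^d_+)$ is the space of all $f\in\mathcal S(\mathbb R^d_+)$ with $\sup_{p,k\in\mathbb N_0^d}\frac{\|x^{(p+k)/2}\partial^p f(x)\|_{L^2(\mathbb R^d_+)}}{A^{|p+k|}k^{(\alpha/2)k}p^{(\alpha/2)p}}<\infty$, and $g^\alpha_\alpha(\mathbb R^d_+)=\bigcap_{A>0}g^{\alpha,A}_{\alpha,A}(\mathbb R^d_+)$. *)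

theory Defs
  imports "HOL-Analysis.Analysis"
begin

text \<open>Points of R^d are modelled as functions nat => real; only the coordinates
  0..d-1 matter. The open orthant R^d_+ and its closure, as extensional function sets.\<close>

definition Opos :: "nat \<Rightarrow> (nat \<Rightarrow> real) set" where
  "Opos d = PiE {..<d} (\<lambda>_. {0<..})"

definition Cpos :: "nat \<Rightarrow> (nat \<Rightarrow> real) set" where
  "Cpos d = PiE {..<d} (\<lambda>_. {0..})"

definition lebd :: "nat \<Rightarrow> (nat \<Rightarrow> real) measure" where
  "lebd d = PiM {..<d} (\<lambda>_. lborel)"

definition pd :: "nat \<Rightarrow> ((nat \<Rightarrow> real) \<Rightarrow> complex) \<Rightarrow> (nat \<Rightarrow> real) \<Rightarrow> complex" where
  "pd i f x = vector_derivative (\<lambda>t. f (x(i := t))) (at (x i))"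

fun pdl :: "nat list \<Rightarrow> ((nat \<Rightarrow> real) \<Rightarrow> complex) \<Rightarrow> (nat \<Rightarrow> real) \<Rightarrow> complex" where
  "pdl [] f = f"
| "pdl (i # is) f = pd i (pdl is f)"

definition mpd :: "nat \<Rightarrow> (nat \<Rightarrow> nat) \<Rightarrow> ((nat \<Rightarrow> real) \<Rightarrow> complex) \<Rightarrow> (nat \<Rightarrow> real) \<Rightarrow> complex" where
  "mpd d p f = pdl (concat (map (\<lambda>j. replicate (p j) j) [0..<d])) f"

definition schwartz_plus :: "nat \<Rightarrow> ((nat \<Rightarrow> real) \<Rightarrow> complex) \<Rightarrow> bool" where
  "schwartz_plus d f \<longleftrightarrow>
     (\<forall>is. set is \<subseteq> {..<d} \<longrightarrow>
        continuous_on (Opos d) (pdl is f) \<and>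
        (\<forall>x\<in>Opos d. \<forall>i<d. (\<lambda>t. pdl is f (x(i := t))) differentiable (at (x i))) \<and>
        (\<exists>g. continuous_on (Cpos d) g \<and> (\<forall>x\<in>Opos d. g x = pdl is f x))) \<and>
     (\<forall>\<beta> \<gamma> :: nat \<Rightarrow> nat. \<exists>C. \<forall>x\<in>Opos d.
        (\<Prod>j<d. x j ^ \<beta> j) * cmod (mpd d \<gamma> f x) \<le> C)"

text \<open>|k| and k^{(\<alpha>/2)k} with the convention 0^0 = 1.\<close>
definition mlen :: "nat \<Rightarrow> (nat \<Rightarrow> nat) \<Rightarrow> nat" where
  "mlen d k = (\<Sum>j<d. k j)"

definition mpow :: "nat \<Rightarrow> real \<Rightarrow> (nat \<Rightarrow> nat) \<Rightarrow> real" where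
  "mpow d \<alpha> k = (\<Prod>j<d. if k j = 0 then 1 else real (k j) powr ((\<alpha> / 2) * real (k j)))"

definition wL2sq :: "nat \<Rightarrow> (nat \<Rightarrow> nat) \<Rightarrow> (nat \<Rightarrow> nat) \<Rightarrow> ((nat \<Rightarrow> real) \<Rightarrow> complex) \<Rightarrow> ennreal" where
  "wL2sq d p k f = (\<integral>\<^sup>+ x. indicator (Opos d) x *
      ennreal (((\<Prod>j<d. x j powr ((real (p j) + real (k j)) / 2)) * cmod (mpd d p f x))\<^sup>2) \<partial>lebd d)"

definition GS_A :: "nat \<Rightarrow> real \<Rightarrow> real \<Rightarrow> ((nat \<Rightarrow> real) \<Rightarrow> complex) set" where
  "GS_A d \<alpha> A = {f. schwartz_plus d f \<and>
     (\<exists>C::real. \<forall>p k. wL2sq d p k f \<le>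
        ennreal ((C * A ^ (mlen d p + mlen d k) * mpow d \<alpha> k * mpow d \<alpha> p)\<^sup>2))}"

definition GS :: "nat \<Rightarrow> real \<Rightarrow> ((nat \<Rightarrow> real) \<Rightarrow> complex) set" where
  "GS d \<alpha> = (\<Inter>A\<in>{0<..}. GS_A d \<alpha> A)"

end

theory Submission
  imports Defs
begin

(*
  Only derivatives in the first coordinate are needed. Let Q(a,b) be the integral over the
  orthant of x_0^(a+b) |d_0^a f|^2, the square of the weighted norm for the multi-indices
  p = (a,0,...,0), k = (b,0,...,0). Writing phi for f restricted to a line in the x_0 direction,
  the pointwise bound t^m |phi|^2 <= (t^(m+1) |phi|^2 / (m+1))' + t^(m+1) (|phi'|^2 + |phi|^2) / (m+1),
  which is |phi + phi'|^2 >= 0, integrates (the boundary terms vanish for Schwartz functions) to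
    (a + b + 1) Q(a,b) <= Q(a+1,b) + Q(a,b+1).
  Iterating this n times from (0,0) bounds Q(0,0) by 2^n / n! times the largest Q(a,b) with
  a + b = n, which for f in g^{alpha,A}_{alpha,A} with alpha <= 1 is at most C^2 A^(2n) n^n.
  As n^n / n! <= e^n, taking A = 1/4 gives Q(0,0) <= C^2 (3/8)^n for all n, so the L^2 norm of
  the continuous function f vanishes.
*)

section \<open>A weighted inequality on the half-line\<close>

lemma has_real_derivative_weighted_norm_sq:
  fixes \<phi> :: "real \<Rightarrow> 'a::real_inner"
  assumes "(\<phi> has_vector_derivative \<phi>') (at t within S)"
  shows "((\<lambda>t. t ^ (m + 1) * (norm (\<phi> t))\<^sup>2 / (m + 1)) has_real_derivative
           t ^ m * (norm (\<phi> t))\<^sup>2 + t ^ (m + 1) * (2 * inner (\<phi> t) \<phi>') / (m + 1)) (at t within S)"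
proof -
  have inner: "((\<lambda>t. inner (\<phi> t) (\<phi> t)) has_real_derivative 2 * inner (\<phi> t) \<phi>') (at t within S)"
    using has_derivative_inner[OF assms[unfolded has_vector_derivative_def] assms[unfolded has_vector_derivative_def]]
    unfolding has_field_derivative_def
    by (rule has_derivative_eq_rhs) (auto simp: fun_eq_iff inner_commute algebra_simps)
  have pow: "((\<lambda>t. t ^ (m + 1)) has_real_derivative (m + 1) * t ^ m) (at t within S)"
    using DERIV_pow[of "m + 1"] by (simp add: has_field_derivative_at_within)
  have "((\<lambda>t. t ^ (m + 1) * (norm (\<phi> t))\<^sup>2 / (m + 1)) has_real_derivative
      (t ^ (m + 1) * (2 * inner (\<phi> t) \<phi>') + (m + 1) * t ^ m * inner (\<phi> t) (\<phi> t)) / (m + 1)) (at t within S)"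
    unfolding power2_norm_eq_inner by (rule DERIV_cdivide[OF DERIV_mult'[OF pow inner]])
  also have "(t ^ (m + 1) * (2 * inner (\<phi> t) \<phi>') + (m + 1) * t ^ m * inner (\<phi> t) (\<phi> t)) / (m + 1)
      = t ^ m * (norm (\<phi> t))\<^sup>2 + t ^ (m + 1) * (2 * inner (\<phi> t) \<phi>') / (m + 1)"
    by (simp add: power2_norm_eq_inner field_simps)
  finally show ?thesis .
qed

lemma weighted_norm_sq_le_deriv:
  fixes u v :: "'a::real_inner"
  assumes "0 < t"
  shows "t ^ m * (norm u)\<^sup>2 \<le> (t ^ m * (norm u)\<^sup>2 + t ^ (m + 1) * (2 * inner u v) / (m + 1))
           + t ^ (m + 1) * ((norm v)\<^sup>2 + (norm u)\<^sup>2) / (m + 1)"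
proof -
  have "(norm (u + v))\<^sup>2 = (norm u)\<^sup>2 + 2 * inner u v + (norm v)\<^sup>2"
    by (simp add: power2_norm_eq_inner inner_simps inner_commute)
  then have "t ^ (m + 1) * (2 * inner u v) / (m + 1) + t ^ (m + 1) * ((norm v)\<^sup>2 + (norm u)\<^sup>2) / (m + 1)
      = t ^ (m + 1) * (norm (u + v))\<^sup>2 / (m + 1)"
    by (simp add: add_divide_distrib[symmetric] algebra_simps)
  moreover have "0 \<le> t ^ (m + 1) * (norm (u + v))\<^sup>2 / (m + 1)"
    using assms by simp
  ultimately show ?thesis
    by linarith
qed

lemma nn_integral_indicator_Icc_eq_integral:
  fixes g :: "real \<Rightarrow> real"
  assumes "g integrable_on {a..b}" and "\<And>t. t \<in> {a..b} \<Longrightarrow> 0 \<le> g t"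
  shows "(\<integral>\<^sup>+t. indicator {a..b} t * ennreal (g t) \<partial>lborel) = ennreal (integral {a..b} g)"
  using nn_integral_has_integral_lebesgue'[OF assms(2) integrable_integral[OF assms(1)]]
  by (simp add: mult.commute)

lemma weighted_norm_sq_integral_Icc_le_real:
  fixes \<phi> \<phi>' :: "real \<Rightarrow> 'a::real_inner"
  assumes der: "\<And>t. 0 < t \<Longrightarrow> (\<phi> has_vector_derivative \<phi>' t) (at t)"
    and cont': "continuous_on {0<..} \<phi>'"
    and ab: "0 < a" "a \<le> b"
  shows "integral {a..b} (\<lambda>t. t ^ m * (norm (\<phi> t))\<^sup>2)
     \<le> b ^ (m + 1) * (norm (\<phi> b))\<^sup>2 / (m + 1)
       + integral {a..b} (\<lambda>t. t ^ (m + 1) * ((norm (\<phi>' t))\<^sup>2 + (norm (\<phi> t))\<^sup>2) / (m + 1))"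
proof -
  define R where "R = (\<lambda>t. t ^ (m + 1) * ((norm (\<phi>' t))\<^sup>2 + (norm (\<phi> t))\<^sup>2) / (m + 1))"
  define h where "h t = t ^ (m + 1) * (norm (\<phi> t))\<^sup>2 / (m + 1)" for t
  define h' where "h' t = t ^ m * (norm (\<phi> t))\<^sup>2 + t ^ (m + 1) * (2 * inner (\<phi> t) (\<phi>' t)) / (m + 1)" for t
  have sub: "{a..b} \<subseteq> {0<..}"
    using ab by auto
  have "continuous_on {0<..} \<phi>"
    by (rule continuous_at_imp_continuous_on) (auto intro: has_vector_derivative_continuous der)
  then have int: "(\<lambda>t. t ^ m * (norm (\<phi> t))\<^sup>2) integrable_on {a..b}" "R integrable_on {a..b}"
    unfolding R_def
    by (intro integrable_continuous_interval continuous_on_subset[OF _ sub] continuous_intros cont'; simp)+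
  have FTC: "(h' has_integral h b - h a) {a..b}"
  proof (rule fundamental_theorem_of_calculus[OF ab(2)])
    fix t assume "t \<in> {a..b}"
    then have "0 < t"
      using sub by auto
    show "(h has_vector_derivative h' t) (at t within {a..b})"
      unfolding h_def h'_def has_real_derivative_iff_has_vector_derivative[symmetric]
      by (rule has_real_derivative_weighted_norm_sq[OF has_vector_derivative_at_within[OF der[OF \<open>0 < t\<close>]]])
  qed
  have "t ^ m * (norm (\<phi> t))\<^sup>2 \<le> h' t + R t" if "t \<in> {a..b}" for t
    using that sub unfolding h'_def R_def by (intro weighted_norm_sq_le_deriv) auto
  then have "integral {a..b} (\<lambda>t. t ^ m * (norm (\<phi> t))\<^sup>2) \<le> integral {a..b} (\<lambda>t. h' t + R t)"
    by (intro integral_le int integrable_add has_integral_integrable[OF FTC])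
  also have "\<dots> = h b - h a + integral {a..b} R"
    using FTC int by (simp add: integral_add has_integral_integrable integral_unique)
  also have "\<dots> \<le> h b + integral {a..b} R"
    using ab by (simp add: h_def)
  finally show ?thesis
    unfolding h_def R_def .
qed

lemma weighted_norm_sq_integral_Icc_le:
  fixes \<phi> \<phi>' :: "real \<Rightarrow> 'a::real_inner"
  assumes der: "\<And>t. 0 < t \<Longrightarrow> (\<phi> has_vector_derivative \<phi>' t) (at t)"
    and cont': "continuous_on {0<..} \<phi>'"
    and ab: "0 < a" "a \<le> b"
  shows "(\<integral>\<^sup>+t. indicator {a..b} t * ennreal (t ^ m * (norm (\<phi> t))\<^sup>2) \<partial>lborel)
     \<le> (\<integral>\<^sup>+t. indicator {0<..} t * ennreal (t ^ (m + 1) * ((norm (\<phi>' t))\<^sup>2 + (norm (\<phi> t))\<^sup>2) / (m + 1)) \<partial>lborel)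
       + ennreal (b ^ (m + 1) * (norm (\<phi> b))\<^sup>2 / (m + 1))"
proof -
  define \<psi> where "\<psi> = (\<lambda>t. t ^ m * (norm (\<phi> t))\<^sup>2)"
  define R where "R = (\<lambda>t. t ^ (m + 1) * ((norm (\<phi>' t))\<^sup>2 + (norm (\<phi> t))\<^sup>2) / (m + 1))"
  define h where "h = b ^ (m + 1) * (norm (\<phi> b))\<^sup>2 / (m + 1)"
  have sub: "{a..b} \<subseteq> {0<..}"
    using ab by auto
  have "continuous_on {0<..} \<phi>"
    by (rule continuous_at_imp_continuous_on) (auto intro: has_vector_derivative_continuous der)
  then have int_\<psi>: "\<psi> integrable_on {a..b}" and int_R: "R integrable_on {a..b}"
    unfolding \<psi>_def R_def
    by (intro integrable_continuous_interval continuous_on_subset[OF _ sub] continuous_intros cont'; simp)+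
  have R_nonneg: "0 \<le> R t" if "t \<in> {a..b}" for t
    using that sub by (auto simp: R_def)
  have "(\<integral>\<^sup>+t. indicator {a..b} t * ennreal (\<psi> t) \<partial>lborel) = ennreal (integral {a..b} \<psi>)"
    by (intro nn_integral_indicator_Icc_eq_integral int_\<psi>) (use sub in \<open>auto simp: \<psi>_def\<close>)
  also have "\<dots> \<le> ennreal (h + integral {a..b} R)"
    unfolding \<psi>_def h_def R_def by (intro ennreal_leI weighted_norm_sq_integral_Icc_le_real der cont' ab)
  also have "\<dots> = ennreal (integral {a..b} R) + ennreal h"
  proof -
    have "0 \<le> h" "0 \<le> integral {a..b} R"
      using ab R_nonneg by (auto simp: h_def intro: integral_nonneg int_R)
    show ?thesis
      unfolding ennreal_plus[OF \<open>0 \<le> h\<close> \<open>0 \<le> integral {a..b} R\<close>] by (rule add.commute)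
  qed
  also have "\<dots> \<le> (\<integral>\<^sup>+t. indicator {0<..} t * ennreal (R t) \<partial>lborel) + ennreal h"
  proof (rule add_right_mono)
    have "ennreal (integral {a..b} R) = (\<integral>\<^sup>+t. indicator {a..b} t * ennreal (R t) \<partial>lborel)"
      using int_R R_nonneg by (intro nn_integral_indicator_Icc_eq_integral[symmetric])
    also have "\<dots> \<le> (\<integral>\<^sup>+t. indicator {0<..} t * ennreal (R t) \<partial>lborel)"
      using sub by (intro nn_integral_mono) (auto simp: indicator_def)
    finally show "ennreal (integral {a..b} R) \<le> (\<integral>\<^sup>+t. indicator {0<..} t * ennreal (R t) \<partial>lborel)" .
  qed
  finally show ?thesis
    unfolding \<psi>_def R_def h_def .
qed

lemma nn_integral_Ioi_eq_SUP_Icc: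
  fixes g :: "real \<Rightarrow> ennreal"
  assumes meas: "(\<lambda>t. indicator {0<..} t * g t) \<in> borel_measurable borel"
  shows "(\<integral>\<^sup>+t. indicator {0<..} t * g t \<partial>lborel)
    = (SUP n. \<integral>\<^sup>+t. indicator {1 / Suc n..real (Suc n)} t * g t \<partial>lborel)"
proof -
  define S where "S n = {1 / Suc n..real (Suc n)}" for n
  define G where "G n t = indicator (S n) t * g t" for n t
  have G_eq: "G n t = indicator (S n) t * (indicator {0<..} t * g t)" for n t
    by (auto simp: G_def S_def indicator_def intro: less_le_trans[rotated])
  have "incseq S"
    by (intro incseq_SucI) (auto simp: S_def frac_le intro: order_trans[rotated])
  then have G_inc: "incseq G"
    by (auto simp: incseq_def le_fun_def G_def indicator_def intro!: mult_right_mono)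
  have G_SUP: "(SUP n. G n t) = indicator {0<..} t * g t" for t
  proof (rule LIMSEQ_unique[OF LIMSEQ_SUP])
    show "incseq (\<lambda>n. G n t)"
      using G_inc by (simp add: incseq_def le_fun_def)
    show "(\<lambda>n. G n t) \<longlonglongrightarrow> indicator {0<..} t * g t"
    proof (cases "0 < t")
      case True
      obtain N :: nat where N: "1 / t < N" "t < N"
        using reals_Archimedean2[of "max (1 / t) t"] by auto
      have "t \<in> S n" if "N \<le> n" for n
      proof -
        have "1 / t < Suc n" "t < Suc n"
          using N that by (auto intro: less_le_trans)
        then show ?thesis
          using True by (simp add: S_def field_simps)
      qed
      then have "eventually (\<lambda>n. t \<in> S n) sequentially"
        unfolding eventually_sequentially by blast
      then show ?thesis
        by (rule tendsto_eventually[OF eventually_mono]) (use True in \<open>simp add: G_def\<close>)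
    qed (simp add: G_eq)
  qed
  have "S n \<in> sets borel" for n
    by (simp add: S_def)
  then have "G n \<in> borel_measurable lborel" for n
    unfolding G_eq[abs_def] using borel_measurable_times_ennreal[OF borel_measurable_indicator meas] by simp
  then have "(\<integral>\<^sup>+t. indicator {0<..} t * g t \<partial>lborel) = (SUP n. integral\<^sup>N lborel (G n))"
    unfolding G_SUP[symmetric] by (rule nn_integral_monotone_convergence_SUP[OF G_inc])
  then show ?thesis
    by (simp add: G_def[abs_def] S_def)
qed

lemma nn_integral_Ioi_le_of_Icc:
  fixes g :: "real \<Rightarrow> ennreal" and \<epsilon> :: "real \<Rightarrow> real"
  assumes meas: "(\<lambda>t. indicator {0<..} t * g t) \<in> borel_measurable borel"
    and Icc: "\<And>a b. 0 < a \<Longrightarrow> a \<le> b \<Longrightarrow> (\<integral>\<^sup>+t. indicator {a..b} t * g t \<partial>lborel) \<le> K + ennreal (\<epsilon> b)"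
    and \<epsilon>: "(\<epsilon> \<longlongrightarrow> 0) at_top"
  shows "(\<integral>\<^sup>+t. indicator {0<..} t * g t \<partial>lborel) \<le> K"
  unfolding nn_integral_Ioi_eq_SUP_Icc[OF meas]
proof (rule SUP_least)
  fix n :: nat
  let ?I = "\<integral>\<^sup>+t. indicator {1 / Suc n..real (Suc n)} t * g t \<partial>lborel"
  have "eventually (\<lambda>b. ?I \<le> K + ennreal (\<epsilon> b)) at_top"
    unfolding eventually_at_top_linorder
  proof (intro exI allI impI)
    fix b assume b: "real (Suc n) \<le> b"
    have "1 / real (Suc n) \<le> 1"
      by simp
    with b have "1 / real (Suc n) \<le> b"
      by linarith
    from b have "?I \<le> (\<integral>\<^sup>+t. indicator {1 / Suc n..b} t * g t \<partial>lborel)"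
      by (intro nn_integral_mono mult_right_mono) (auto simp: indicator_def)
    also have "\<dots> \<le> K + ennreal (\<epsilon> b)"
      using \<open>1 / real (Suc n) \<le> b\<close> by (intro Icc) auto
    finally show "?I \<le> K + ennreal (\<epsilon> b)" .
  qed
  moreover have "((\<lambda>b. K + ennreal (\<epsilon> b)) \<longlongrightarrow> K + ennreal 0) at_top"
    by (intro tendsto_add tendsto_const tendsto_ennrealI \<epsilon>)
  ultimately show "?I \<le> K"
    using tendsto_lowerbound by fastforce
qed

lemma weighted_norm_sq_tendsto_0:
  fixes \<phi> :: "real \<Rightarrow> 'a::real_normed_vector"
  assumes bounded: "\<And>t. 0 < t \<Longrightarrow> norm (\<phi> t) \<le> C0"
    and decay: "\<And>t. 0 < t \<Longrightarrow> t ^ (m + 2) * norm (\<phi> t) \<le> C1"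
  shows "((\<lambda>b. b ^ (m + 1) * (norm (\<phi> b))\<^sup>2 / (m + 1)) \<longlongrightarrow> 0) at_top"
proof (rule tendsto_sandwich[OF _ _ tendsto_const])
  have "0 \<le> C0" "0 \<le> C1"
    using bounded[of 1] decay[of 1] by (auto intro: order_trans[OF norm_ge_zero])
  have "b ^ (m + 1) * (norm (\<phi> b))\<^sup>2 / (m + 1) \<le> C0 * C1 / b" if "1 \<le> b" for b
  proof -
    have "0 \<le> b ^ (m + 1) * (norm (\<phi> b))\<^sup>2"
      using that by simp
    then have "b ^ (m + 1) * (norm (\<phi> b))\<^sup>2 / (m + 1) \<le> b ^ (m + 1) * (norm (\<phi> b))\<^sup>2"
      by (simp add: divide_le_eq mult_le_cancel_left1)
    also have "\<dots> = (b ^ (m + 2) * norm (\<phi> b)) * norm (\<phi> b) / b"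
      using that by (simp add: field_simps power2_eq_square)
    also have "\<dots> \<le> C1 * C0 / b"
      using that bounded[of b] decay[of b] \<open>0 \<le> C1\<close>
      by (intro divide_right_mono mult_mono) auto
    finally show ?thesis
      by (simp add: mult.commute)
  qed
  then show "eventually (\<lambda>b. b ^ (m + 1) * (norm (\<phi> b))\<^sup>2 / (m + 1) \<le> C0 * C1 / b) at_top"
    using eventually_ge_at_top[of 1] by (rule eventually_mono[rotated])
  show "eventually (\<lambda>b. 0 \<le> b ^ (m + 1) * (norm (\<phi> b))\<^sup>2 / (m + 1)) at_top"
    using eventually_ge_at_top[of 1] by (rule eventually_mono) simp
  show "((\<lambda>b. C0 * C1 / b) \<longlongrightarrow> 0) at_top"
    by (intro tendsto_divide_0[OF tendsto_const] filterlim_at_top_imp_at_infinity filterlim_ident)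
qed

lemma weighted_norm_sq_integral_le:
  fixes \<phi> \<phi>' :: "real \<Rightarrow> 'a::real_inner"
  assumes der: "\<And>t. 0 < t \<Longrightarrow> (\<phi> has_vector_derivative \<phi>' t) (at t)"
    and cont': "continuous_on {0<..} \<phi>'"
    and bounded: "\<And>t. 0 < t \<Longrightarrow> norm (\<phi> t) \<le> C0"
    and decay: "\<And>t. 0 < t \<Longrightarrow> t ^ (m + 2) * norm (\<phi> t) \<le> C1"
  shows "(\<integral>\<^sup>+t. indicator {0<..} t * ennreal (t ^ m * (norm (\<phi> t))\<^sup>2) \<partial>lborel)
     \<le> (\<integral>\<^sup>+t. indicator {0<..} t * ennreal (t ^ (m + 1) * ((norm (\<phi>' t))\<^sup>2 + (norm (\<phi> t))\<^sup>2) / (m + 1)) \<partial>lborel)"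
proof (rule nn_integral_Ioi_le_of_Icc)
  show "(\<integral>\<^sup>+t. indicator {a..b} t * ennreal (t ^ m * (norm (\<phi> t))\<^sup>2) \<partial>lborel)
      \<le> (\<integral>\<^sup>+t. indicator {0<..} t * ennreal (t ^ (m + 1) * ((norm (\<phi>' t))\<^sup>2 + (norm (\<phi> t))\<^sup>2) / (m + 1)) \<partial>lborel)
        + ennreal (b ^ (m + 1) * (norm (\<phi> b))\<^sup>2 / (m + 1))" if "0 < a" "a \<le> b" for a b
    using der cont' that by (rule weighted_norm_sq_integral_Icc_le)
  show "((\<lambda>b. b ^ (m + 1) * (norm (\<phi> b))\<^sup>2 / (m + 1)) \<longlongrightarrow> 0) at_top"
    using bounded decay by (rule weighted_norm_sq_tendsto_0)
  have "continuous_on {0<..} (\<lambda>t. t ^ m * (norm (\<phi> t))\<^sup>2)"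
    by (intro continuous_intros continuous_at_imp_continuous_on)
       (auto intro: has_vector_derivative_continuous der)
  then have "(\<lambda>t. ennreal (indicator {0<..} t *\<^sub>R (t ^ m * (norm (\<phi> t))\<^sup>2))) \<in> borel_measurable borel"
    by (intro measurable_compose[OF borel_measurable_continuous_on_indicator measurable_ennreal]) auto
  then show "(\<lambda>t. indicator {0<..} t * ennreal (t ^ m * (norm (\<phi> t))\<^sup>2)) \<in> borel_measurable borel"
    by (rule measurable_cong[THEN iffD1, rotated]) (simp split: split_indicator)
qed

section \<open>A lattice recursion\<close>

lemma origin_le_of_level_bound:
  fixes Q :: "nat \<Rightarrow> nat \<Rightarrow> ennreal"
  assumes step: "\<And>a b. Q a b \<le> ennreal (1 / (real (a + b) + 1)) * (Q (Suc a) b + Q a (Suc b))"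
    and level: "\<And>a b. a + b = n \<Longrightarrow> Q a b \<le> ennreal B"
    and "0 \<le> B"
  shows "Q 0 0 \<le> ennreal (B * 2 ^ n / fact n)"
proof -
  have "Q a b \<le> ennreal (B * 2 ^ (n - (a + b)) * fact (a + b) / fact n)" if "a + b \<le> n" for a b
    using that
  proof (induction "n - (a + b)" arbitrary: a b)
    case 0
    then show ?case
      using level[of a b] by simp
  next
    case (Suc i)
    define c where "c = real (a + b) + 1"
    define Y where "Y = B * 2 ^ i * fact (a + b) / fact n"
    have "0 < c" "0 \<le> c * Y"
      using \<open>0 \<le> B\<close> by (simp_all add: c_def Y_def)
    have "i = n - (a + b + 1)" and "a + b + 1 \<le> n"
      using Suc.hyps(2) by arith+
    then have IH: "Q (Suc a) b \<le> ennreal (c * Y)" "Q a (Suc b) \<le> ennreal (c * Y)"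
      using Suc.hyps(1)[of "Suc a" b] Suc.hyps(1)[of a "Suc b"] by (simp_all add: c_def Y_def algebra_simps)
    have "Q a b \<le> ennreal (1 / c) * (Q (Suc a) b + Q a (Suc b))"
      unfolding c_def by (rule step)
    also have "\<dots> \<le> ennreal (1 / c) * (ennreal (c * Y) + ennreal (c * Y))"
      by (intro mult_left_mono add_mono IH) simp
    also have "\<dots> = ennreal (1 / c) * ennreal (c * Y + c * Y)"
      by (simp only: ennreal_plus[OF \<open>0 \<le> c * Y\<close> \<open>0 \<le> c * Y\<close>])
    also have "\<dots> = ennreal (1 / c * (c * Y + c * Y))"
      using \<open>0 < c\<close> \<open>0 \<le> c * Y\<close> by (intro ennreal_mult[symmetric]) (auto simp: mult.commute)
    also have "1 / c * (c * Y + c * Y) = B * 2 ^ (n - (a + b)) * fact (a + b) / fact n"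
      using \<open>0 < c\<close> Suc.hyps(2)[symmetric] by (simp add: Y_def)
    finally show ?case .
  qed
  from this[of 0 0] show ?thesis
    by simp
qed

lemma power_div_fact_le_exp:
  fixes x :: real
  assumes "0 \<le> x"
  shows "x ^ n / fact n \<le> exp x"
proof -
  have sums: "(\<lambda>k. x ^ k /\<^sub>R fact k) sums exp x"
    by (rule exp_converges)
  have "x ^ n / fact n \<le> (\<Sum>k<Suc n. x ^ k /\<^sub>R fact k)"
    using assms member_le_sum[of n "{..<Suc n}" "\<lambda>k. x ^ k /\<^sub>R fact k"]
    by (simp add: divide_inverse_commute)
  also have "\<dots> \<le> exp x"
    using assms sum_le_suminf[OF sums_summable[OF sums], of "{..<Suc n}"] sums_unique[OF sums] by simp
  finally show ?thesis .
qed

lemma level_bound_div_fact_le: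
  fixes A c :: real
  assumes "0 \<le> c"
  shows "c * A ^ (2 * n) * real n ^ n * 2 ^ n / fact n \<le> c * (2 * A\<^sup>2 * exp 1) ^ n"
proof -
  have "c * A ^ (2 * n) * real n ^ n * 2 ^ n / fact n = c * (2 * A\<^sup>2) ^ n * (real n ^ n / fact n)"
    by (simp add: power_mult power_mult_distrib)
  also have "\<dots> \<le> c * (2 * A\<^sup>2) ^ n * exp 1 ^ n"
    using assms power_div_fact_le_exp[of "real n" n]
    by (intro mult_left_mono) (simp_all flip: exp_of_nat_mult)
  also have "\<dots> = c * (2 * A\<^sup>2 * exp 1) ^ n"
    by (simp add: power_mult_distrib)
  finally show ?thesis .
qed

section \<open>Multi-indices concentrated on the first coordinate\<close>

definition first_index :: "nat \<Rightarrow> nat \<Rightarrow> nat" where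
  "first_index a = (\<lambda>j. if j = 0 then a else 0)"

lemma prod_lessThan_eq_first:
  fixes d :: nat
  assumes "0 < d" and "\<And>j. 0 < j \<Longrightarrow> j < d \<Longrightarrow> g j = 1"
  shows "(\<Prod>j<d. g j) = g 0"
proof -
  have "(\<Prod>j<d. g j) = g 0 * (\<Prod>j\<in>{..<d} - {0}. g j)"
    using assms(1) by (subst prod.remove[of _ 0]) auto
  also have "(\<Prod>j\<in>{..<d} - {0}. g j) = 1"
    using assms(2) by (intro prod.neutral) auto
  finally show ?thesis
    by simp
qed

lemma mlen_first_index: "0 < d \<Longrightarrow> mlen d (first_index a) = a"
  by (simp add: mlen_def first_index_def)

lemma mpow_first_index:
  "0 < d \<Longrightarrow> mpow d \<alpha> (first_index a) = (if a = 0 then 1 else real a powr ((\<alpha> / 2) * real a))"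
  unfolding mpow_def by (subst prod_lessThan_eq_first) (auto simp: first_index_def)

lemma mpd_first_index: "0 < d \<Longrightarrow> mpd d (first_index a) f = pdl (replicate a 0) f"
proof -
  assume "0 < d"
  then have upt: "[0..<d] = 0 # [1..<d]"
    by (simp add: upt_conv_Cons)
  have rest: "concat (map (\<lambda>j. replicate (first_index a j) j) [1..<d]) = []"
    by (simp add: first_index_def)
  show ?thesis
    unfolding mpd_def upt list.map concat.simps rest by (simp add: first_index_def)
qed

lemma mpow_first_index_sq_le:
  assumes "0 < d" "\<alpha> \<le> 1" "a \<le> n"
  shows "(mpow d \<alpha> (first_index a))\<^sup>2 \<le> real n ^ a"
proof (cases "a = 0")
  case False
  then have "1 \<le> real a"
    by simp
  then have "real a powr ((\<alpha> / 2) * real a) \<le> real n powr (real a / 2)"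
    using assms by (intro order_trans[OF powr_mono powr_mono2]) auto
  then have "(real a powr ((\<alpha> / 2) * real a))\<^sup>2 \<le> (real n powr (real a / 2))\<^sup>2"
    by (intro power_mono) auto
  also have "\<dots> = real n ^ a"
    using False assms by (simp add: power2_eq_square powr_realpow flip: powr_add)
  finally show ?thesis
    using assms False by (simp add: mpow_first_index)
qed (use assms in \<open>simp add: mpow_first_index\<close>)

section \<open>Integration over the orthant\<close>

lemma Opos_pos: "x \<in> Opos d \<Longrightarrow> j < d \<Longrightarrow> 0 < x j"
  by (auto simp: Opos_def PiE_iff)

lemma Opos_in_sets_borel: "Opos d \<in> sets borel"
proof -
  define P where "P = (\<Inter>j<d. {x :: nat \<Rightarrow> real. 0 < x j})"
  define E where "E = (\<Inter>j\<in>{d..}. {x :: nat \<Rightarrow> real. x j = undefined})"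
  have "open P"
    unfolding P_def by (intro open_INT ballI open_Collect_less continuous_on_const) auto
  moreover have "closed E"
    unfolding E_def by (intro closed_INT ballI closed_Collect_eq continuous_on_const) auto
  moreover have "Opos d = P \<inter> E"
  proof (intro set_eqI iffI)
    fix x assume "x \<in> Opos d"
    then show "x \<in> P \<inter> E"
      by (auto simp: Opos_def P_def E_def PiE_iff extensional_def)
  next
    fix x assume x: "x \<in> P \<inter> E"
    then have "x j = undefined" if "j \<notin> {..<d}" for j
      using that by (auto simp: E_def)
    with x show "x \<in> Opos d"
      by (auto simp: Opos_def P_def PiE_iff extensional_def)
  qed
  ultimately show ?thesis
    by auto
qed

lemma measurable_ident_lebd_borel: "(\<lambda>x. x) \<in> lebd d \<rightarrow>\<^sub>M borel"
proof (rule measurable_coordinatewise_then_product)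
  fix i
  show "(\<lambda>x. x i) \<in> borel_measurable (lebd d)"
  proof (cases "i < d")
    case True
    then show ?thesis
      using measurable_component_singleton[of i "{..<d}" "\<lambda>_. lborel"] by (simp add: lebd_def)
  next
    case False
    then show ?thesis
      by (intro measurable_cong[THEN iffD1, OF _ measurable_const[of undefined]])
         (auto simp: lebd_def space_PiM PiE_iff extensional_def)
  qed
qed

lemma borel_measurable_lebd_indicator_Opos:
  assumes "continuous_on (Opos d) h"
  shows "(\<lambda>x. indicator (Opos d) x * ennreal (h x)) \<in> borel_measurable (lebd d)"
proof -
  have "(\<lambda>x. ennreal (indicator (Opos d) x *\<^sub>R h x)) \<in> borel_measurable borel"
    by (intro measurable_compose[OF borel_measurable_continuous_on_indicator measurable_ennreal]
          Opos_in_sets_borel assms)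
  from measurable_compose[OF measurable_ident_lebd_borel this]
  show ?thesis
    by (rule measurable_cong[THEN iffD1, rotated]) (simp split: split_indicator)
qed

lemma continuous_on_coordinate: "continuous_on S (\<lambda>x::'a \<Rightarrow> real. x j)"
  by (rule continuous_on_subset[OF continuous_on_product_coordinates]) simp

interpretation lborel_product: product_sigma_finite "\<lambda>_::nat. lborel :: real measure"
  by (simp add: product_sigma_finite_def sigma_finite_lborel)

lemma nn_integral_lebd_slice:
  assumes "0 < d" and "F \<in> borel_measurable (lebd d)"
  shows "integral\<^sup>N (lebd d) F = (\<integral>\<^sup>+y. (\<integral>\<^sup>+t. F (y(0 := t)) \<partial>lborel) \<partial>PiM {1..<d} (\<lambda>_. lborel))"
proof -
  have "{..<d} = insert 0 {1..<d}"
    using assms(1) by auto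
  with assms(2) show ?thesis
    by (simp add: lebd_def lborel_product.product_nn_integral_insert)
qed

lemma update_0_in_Opos_iff:
  assumes "0 < d" and "y \<in> space (PiM {1..<d} (\<lambda>_. lborel :: real measure))"
  shows "y(0 := t) \<in> Opos d \<longleftrightarrow> 0 < t \<and> (\<forall>j\<in>{1..<d}. 0 < y j)"
proof -
  have "y j = undefined" if "j \<notin> {1..<d}" for j
    using assms(2) that by (auto simp: space_PiM PiE_iff extensional_def)
  moreover have "{..<d} = insert 0 {1..<d}"
    using assms(1) by auto
  ultimately show ?thesis
    unfolding Opos_def by (auto simp: PiE_iff extensional_def)
qed

lemma open_fun_contains_coordinate_balls:
  fixes U :: "('i \<Rightarrow> real) set"
  assumes "open U" "x \<in> U"
  obtains e where "\<And>j. 0 < e j" "\<And>z. (\<And>j. dist (x j) (z j) < e j) \<Longrightarrow> z \<in> U"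
proof -
  have "openin (product_topology (\<lambda>_. euclidean) UNIV) U"
    using \<open>open U\<close> by (simp add: euclidean_product_topology)
  then obtain V where V: "\<And>j. open (V j)" "x \<in> PiE UNIV V" "PiE UNIV V \<subseteq> U"
    using \<open>x \<in> U\<close> unfolding openin_product_topology_alt by force
  have "x j \<in> V j" for j
    using V(2) by (auto simp: PiE_iff)
  then have "\<exists>e>0. ball (x j) e \<subseteq> V j" for j
    using V(1)[of j] open_contains_ball[of "V j"] by blast
  then obtain e where e: "\<And>j. 0 < e j" "\<And>j. ball (x j) (e j) \<subseteq> V j"
    by metis
  have "z \<in> U" if "\<And>j. dist (x j) (z j) < e j" for z
    using that e(2) V(3) by (force simp: PiE_iff)
  with e(1) that show ?thesis
    by blast
qed

lemma Opos_box_subset: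
  assumes x: "x \<in> Opos d" and "open U" "x \<in> U"
  obtains \<delta> where "0 < \<delta>" "PiE {..<d} (\<lambda>j. {x j - \<delta> <..< x j + \<delta>}) \<subseteq> U \<inter> Opos d"
proof -
  obtain e where e: "\<And>j. 0 < e j" "\<And>z. (\<And>j. dist (x j) (z j) < e j) \<Longrightarrow> z \<in> U"
    using open_fun_contains_coordinate_balls[OF \<open>open U\<close> \<open>x \<in> U\<close>] by blast
  define \<delta> where "\<delta> = Min (insert 1 ((\<lambda>j. min (e j) (x j)) ` {..<d}))"
  have "0 < \<delta>"
    using e(1) Opos_pos[OF x] by (auto simp: \<delta>_def)
  have \<delta>_le: "\<delta> \<le> e j" "\<delta> \<le> x j" if "j < d" for j
    using that by (auto simp: \<delta>_def intro: Min.coboundedI[THEN order_trans])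
  have "z \<in> U \<inter> Opos d" if z: "z \<in> PiE {..<d} (\<lambda>j. {x j - \<delta> <..< x j + \<delta>})" for z
  proof -
    have near: "\<bar>z j - x j\<bar> < \<delta>" if "j < d" for j
      using z that by (force simp: PiE_iff abs_less_iff)
    have far: "z j = x j" if "\<not> j < d" for j
      using z x that by (auto simp: Opos_def PiE_iff extensional_def)
    have "dist (x j) (z j) < e j" for j
      using near[of j] \<delta>_le[of j] far[of j] e(1)[of j] by (cases "j < d") (auto simp: dist_real_def)
    then have "z \<in> U"
      by (rule e(2))
    moreover have "z \<in> Opos d"
      using z near \<delta>_le by (force simp: Opos_def PiE_iff)
    ultimately show ?thesis
      by simp
  qed
  with \<open>0 < \<delta>\<close> that show ?thesis
    by blast
qed

lemma emeasure_lebd_box: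
  assumes "0 \<le> \<delta>"
  shows "emeasure (lebd d) (PiE {..<d} (\<lambda>j. {x j - \<delta> <..< x j + \<delta>})) = ennreal ((2 * \<delta>) ^ d)"
proof -
  have "emeasure (lebd d) (PiE {..<d} (\<lambda>j. {x j - \<delta> <..< x j + \<delta>}))
      = (\<Prod>j<d. emeasure lborel {x j - \<delta> <..< x j + \<delta>})"
    unfolding lebd_def by (rule lborel_product.emeasure_PiM) auto
  also have "\<dots> = ennreal ((2 * \<delta>) ^ d)"
    using assms by (simp add: ennreal_power)
  finally show ?thesis .
qed

lemma eq_0_of_nn_integral_Opos_eq_0:
  fixes g :: "(nat \<Rightarrow> real) \<Rightarrow> 'a::real_normed_vector"
  assumes cont: "continuous_on (Opos d) g"
    and int0: "(\<integral>\<^sup>+x. indicator (Opos d) x * ennreal ((norm (g x))\<^sup>2) \<partial>lebd d) = 0"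
    and x: "x \<in> Opos d"
  shows "g x = 0"
proof (rule ccontr)
  assume "g x \<noteq> 0"
  define r where "r = norm (g x) / 2"
  have "0 < r"
    using \<open>g x \<noteq> 0\<close> by (simp add: r_def)
  obtain U where U: "open U" "U \<inter> Opos d = g -` ball (g x) r \<inter> Opos d"
    using cont unfolding continuous_on_open_invariant by (meson open_ball)
  have "x \<in> U"
    using U(2) x \<open>0 < r\<close> by auto
  then obtain \<delta> where "0 < \<delta>" and box: "PiE {..<d} (\<lambda>j. {x j - \<delta> <..< x j + \<delta>}) \<subseteq> U \<inter> Opos d"
    using Opos_box_subset[OF x U(1)] by blast
  define B where "B = PiE {..<d} (\<lambda>j. {x j - \<delta> <..< x j + \<delta>})"
  have large: "r \<le> norm (g z)" if "z \<in> B" for z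
  proof -
    have "dist (g x) (g z) < r"
      using that box U(2) by (auto simp: B_def)
    then show ?thesis
      using norm_triangle_ineq2[of "g x" "g z"] by (simp add: r_def dist_norm)
  qed
  have "B \<in> sets (lebd d)"
    unfolding B_def lebd_def by (rule sets_PiM_I_finite) auto
  have "ennreal (r\<^sup>2) * emeasure (lebd d) B = (\<integral>\<^sup>+z. ennreal (r\<^sup>2) * indicator B z \<partial>lebd d)"
    using \<open>B \<in> sets (lebd d)\<close> by (rule nn_integral_cmult_indicator[symmetric])
  also have "\<dots> \<le> (\<integral>\<^sup>+z. indicator (Opos d) z * ennreal ((norm (g z))\<^sup>2) \<partial>lebd d)"
    using box large \<open>0 < r\<close>
    by (intro nn_integral_mono) (auto simp: B_def indicator_def intro!: ennreal_leI power_mono)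
  finally have "ennreal (r\<^sup>2 * (2 * \<delta>) ^ d) \<le> 0"
    using int0 \<open>0 < \<delta>\<close> by (simp add: B_def emeasure_lebd_box ennreal_mult)
  with \<open>0 < r\<close> \<open>0 < \<delta>\<close> show False
    by simp
qed

section \<open>Moments along the first coordinate\<close>

lemma schwartz_plus_continuous_on_pd0:
  "0 < d \<Longrightarrow> schwartz_plus d f \<Longrightarrow> continuous_on (Opos d) (pdl (replicate a 0) f)"
  unfolding schwartz_plus_def by (auto dest!: spec[of _ "replicate a 0"])

lemma schwartz_plus_differentiable_pd0:
  "0 < d \<Longrightarrow> schwartz_plus d f \<Longrightarrow> x \<in> Opos d
    \<Longrightarrow> (\<lambda>t. pdl (replicate a 0) f (x(0 := t))) differentiable (at (x 0))"
  unfolding schwartz_plus_def by (auto dest!: spec[of _ "replicate a 0"])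

lemma schwartz_plus_bounded_pd0:
  assumes "0 < d" "schwartz_plus d f"
  obtains C where "\<And>x. x \<in> Opos d \<Longrightarrow> x 0 ^ k * cmod (pdl (replicate a 0) f x) \<le> C"
proof -
  obtain C where "\<forall>x\<in>Opos d. (\<Prod>j<d. x j ^ first_index k j) * cmod (mpd d (first_index a) f x) \<le> C"
    using assms(2) unfolding schwartz_plus_def by blast
  moreover have "(\<Prod>j<d. x j ^ first_index k j) = x 0 ^ k" for x :: "nat \<Rightarrow> real"
    using assms(1) by (subst prod_lessThan_eq_first) (auto simp: first_index_def)
  ultimately have "\<forall>x\<in>Opos d. x 0 ^ k * cmod (pdl (replicate a 0) f x) \<le> C"
    by (simp add: mpd_first_index[OF assms(1)])
  with that show ?thesis
    by blast
qed

(* Q(a,b) of the proof idea above. *)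
definition wmoment :: "nat \<Rightarrow> ((nat \<Rightarrow> real) \<Rightarrow> complex) \<Rightarrow> nat \<Rightarrow> nat \<Rightarrow> ennreal" where
  "wmoment d f a b =
     (\<integral>\<^sup>+x. indicator (Opos d) x * ennreal (x 0 ^ (a + b) * (cmod (pdl (replicate a 0) f x))\<^sup>2) \<partial>lebd d)"

lemma wL2sq_first_index:
  assumes "0 < d"
  shows "wL2sq d (first_index a) (first_index b) f = wmoment d f a b"
  unfolding wL2sq_def wmoment_def
proof (rule nn_integral_cong)
  fix x
  show "indicator (Opos d) x * ennreal (((\<Prod>j<d. x j powr ((real (first_index a j) + real (first_index b j)) / 2))
          * cmod (mpd d (first_index a) f x))\<^sup>2)
      = indicator (Opos d) x * ennreal (x 0 ^ (a + b) * (cmod (pdl (replicate a 0) f x))\<^sup>2)"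
  proof (cases "x \<in> Opos d")
    case True
    then have "(\<Prod>j<d. x j powr ((real (first_index a j) + real (first_index b j)) / 2))
        = x 0 powr ((real a + real b) / 2)"
      using assms by (subst prod_lessThan_eq_first) (auto simp: first_index_def dest: Opos_pos[OF True])
    moreover have "(x 0 powr ((real a + real b) / 2))\<^sup>2 = x 0 ^ (a + b)"
      using Opos_pos[OF True assms]
      by (simp add: power2_eq_square flip: powr_add powr_realpow)
    ultimately show ?thesis
      by (simp add: mpd_first_index[OF assms] power_mult_distrib)
  qed simp
qed

lemma borel_measurable_wmoment_integrand:
  assumes "0 < d" "schwartz_plus d f"
  shows "(\<lambda>x. indicator (Opos d) x * ennreal (x 0 ^ m * (cmod (pdl (replicate a 0) f x))\<^sup>2))
    \<in> borel_measurable (lebd d)"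
proof (rule borel_measurable_lebd_indicator_Opos)
  show "continuous_on (Opos d) (\<lambda>x. x 0 ^ m * (cmod (pdl (replicate a 0) f x))\<^sup>2)"
    by (intro continuous_intros continuous_on_coordinate schwartz_plus_continuous_on_pd0 assms)
qed

lemma nn_integral_wmoment_succ_sum:
  assumes "0 < d" "schwartz_plus d f"
  shows "(\<integral>\<^sup>+x. indicator (Opos d) x * ennreal (x 0 ^ (a + b + 1) *
            ((cmod (pdl (replicate (Suc a) 0) f x))\<^sup>2 + (cmod (pdl (replicate a 0) f x))\<^sup>2) / (real (a + b) + 1)) \<partial>lebd d)
    = ennreal (1 / (real (a + b) + 1)) * (wmoment d f (Suc a) b + wmoment d f a (Suc b))"
proof -
  define F where "F c x = indicator (Opos d) x * ennreal (x 0 ^ (a + b + 1) * (cmod (pdl (replicate c 0) f x))\<^sup>2)"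
    for c x
  have [measurable]: "F c \<in> borel_measurable (lebd d)" for c
    unfolding F_def by (rule borel_measurable_wmoment_integrand[OF assms])
  have "indicator (Opos d) x * ennreal (x 0 ^ (a + b + 1) *
            ((cmod (pdl (replicate (Suc a) 0) f x))\<^sup>2 + (cmod (pdl (replicate a 0) f x))\<^sup>2) / (real (a + b) + 1))
      = ennreal (1 / (real (a + b) + 1)) * (F (Suc a) x + F a x)" for x
  proof (cases "x \<in> Opos d")
    case True
    define u where "u c = x 0 ^ (a + b + 1) * (cmod (pdl (replicate c 0) f x))\<^sup>2" for c
    have u_nonneg: "0 \<le> u c" for c
      using Opos_pos[OF True assms(1)] by (simp add: u_def)
    have "indicator (Opos d) x * ennreal (x 0 ^ (a + b + 1) *
            ((cmod (pdl (replicate (Suc a) 0) f x))\<^sup>2 + (cmod (pdl (replicate a 0) f x))\<^sup>2) / (real (a + b) + 1))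
        = ennreal (1 / (real (a + b) + 1) * (u (Suc a) + u a))"
      using True by (simp add: u_def algebra_simps add_divide_distrib)
    also have "\<dots> = ennreal (1 / (real (a + b) + 1)) * (ennreal (u (Suc a)) + ennreal (u a))"
      using u_nonneg by (simp add: ennreal_mult ennreal_plus add_nonneg_nonneg del: times_divide_eq_left)
    finally show ?thesis
      using True by (simp add: F_def u_def)
  qed (simp add: F_def)
  then have "(\<integral>\<^sup>+x. indicator (Opos d) x * ennreal (x 0 ^ (a + b + 1) *
            ((cmod (pdl (replicate (Suc a) 0) f x))\<^sup>2 + (cmod (pdl (replicate a 0) f x))\<^sup>2) / (real (a + b) + 1)) \<partial>lebd d)
      = ennreal (1 / (real (a + b) + 1)) * (integral\<^sup>N (lebd d) (F (Suc a)) + integral\<^sup>N (lebd d) (F a))"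
    by (simp add: nn_integral_cmult nn_integral_add)
  also have "integral\<^sup>N (lebd d) (F (Suc a)) = wmoment d f (Suc a) b"
    by (simp add: F_def[abs_def] wmoment_def)
  also have "integral\<^sup>N (lebd d) (F a) = wmoment d f a (Suc b)"
    by (simp add: F_def[abs_def] wmoment_def)
  finally show ?thesis .
qed

lemma slice_wmoment_integrand_le:
  assumes d: "0 < d" and sp: "schwartz_plus d f"
    and y: "y \<in> space (PiM {1..<d} (\<lambda>_. lborel :: real measure))"
  shows "(\<integral>\<^sup>+t. indicator (Opos d) (y(0 := t)) * ennreal (t ^ m * (cmod (pdl (replicate a 0) f (y(0 := t))))\<^sup>2) \<partial>lborel)
    \<le> (\<integral>\<^sup>+t. indicator (Opos d) (y(0 := t)) * ennreal (t ^ (m + 1) *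
          ((cmod (pdl (replicate (Suc a) 0) f (y(0 := t))))\<^sup>2 + (cmod (pdl (replicate a 0) f (y(0 := t))))\<^sup>2) / (real m + 1)) \<partial>lborel)"
proof (cases "\<forall>j\<in>{1..<d}. 0 < y j")
  case True
  define \<phi> where "\<phi> c = (\<lambda>t. pdl (replicate c 0) f (y(0 := t)))" for c
  have in_Opos: "y(0 := t) \<in> Opos d" if "0 < t" for t
    using update_0_in_Opos_iff[OF d y] True that by simp
  have ind: "indicator (Opos d) (y(0 := t)) = (indicator {0<..} t :: ennreal)" for t
    using update_0_in_Opos_iff[OF d y] True by (simp add: indicator_def)
  have diff: "\<phi> c differentiable (at t)" if "0 < t" for c t
    using schwartz_plus_differentiable_pd0[OF d sp in_Opos[OF that]] by (simp add: \<phi>_def)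
  have der: "(\<phi> a has_vector_derivative \<phi> (Suc a) t) (at t)" if "0 < t" for t
    using vector_derivative_works[THEN iffD1, OF diff[OF that]] by (simp add: \<phi>_def pd_def)
  have cont: "continuous_on {0<..} (\<phi> (Suc a))"
    by (intro continuous_at_imp_continuous_on ballI differentiable_imp_continuous_within diff) simp
  obtain C0 where C0: "\<And>x. x \<in> Opos d \<Longrightarrow> x 0 ^ 0 * cmod (pdl (replicate a 0) f x) \<le> C0"
    using schwartz_plus_bounded_pd0[OF d sp] by blast
  obtain C1 where C1: "\<And>x. x \<in> Opos d \<Longrightarrow> x 0 ^ (m + 2) * cmod (pdl (replicate a 0) f x) \<le> C1"
    using schwartz_plus_bounded_pd0[OF d sp] by blast
  have bounded: "norm (\<phi> a t) \<le> C0" and decay: "t ^ (m + 2) * norm (\<phi> a t) \<le> C1" if "0 < t" for t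
    using C0[OF in_Opos[OF that]] C1[OF in_Opos[OF that]] by (simp_all add: \<phi>_def)
  have "(\<integral>\<^sup>+t. indicator {0<..} t * ennreal (t ^ m * (norm (\<phi> a t))\<^sup>2) \<partial>lborel)
    \<le> (\<integral>\<^sup>+t. indicator {0<..} t * ennreal (t ^ (m + 1) * ((norm (\<phi> (Suc a) t))\<^sup>2 + (norm (\<phi> a t))\<^sup>2) / (m + 1)) \<partial>lborel)"
    by (rule weighted_norm_sq_integral_le[OF der cont bounded decay])
  then show ?thesis
    by (simp add: ind \<phi>_def add.commute)
next
  case False
  then have "indicator (Opos d) (y(0 := t)) = (0 :: ennreal)" for t
    using update_0_in_Opos_iff[OF d y] by simp
  then show ?thesis
    by simp
qed

lemma wmoment_le_succ:
  assumes d: "0 < d" and sp: "schwartz_plus d f"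
  shows "wmoment d f a b
    \<le> ennreal (1 / (real (a + b) + 1)) * (wmoment d f (Suc a) b + wmoment d f a (Suc b))"
proof -
  define H where "H x = indicator (Opos d) x * ennreal (x 0 ^ (a + b + 1) *
      ((cmod (pdl (replicate (Suc a) 0) f x))\<^sup>2 + (cmod (pdl (replicate a 0) f x))\<^sup>2) / (real (a + b) + 1))" for x
  have H_meas: "H \<in> borel_measurable (lebd d)"
    unfolding H_def
    by (intro borel_measurable_lebd_indicator_Opos continuous_intros continuous_on_coordinate
        schwartz_plus_continuous_on_pd0 d sp) simp
  have "wmoment d f a b = (\<integral>\<^sup>+y. (\<integral>\<^sup>+t. indicator (Opos d) (y(0 := t))
      * ennreal (t ^ (a + b) * (cmod (pdl (replicate a 0) f (y(0 := t))))\<^sup>2) \<partial>lborel) \<partial>PiM {1..<d} (\<lambda>_. lborel))"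
    unfolding wmoment_def by (simp add: nn_integral_lebd_slice[OF d borel_measurable_wmoment_integrand[OF d sp]])
  also have "\<dots> \<le> (\<integral>\<^sup>+y. (\<integral>\<^sup>+t. indicator (Opos d) (y(0 := t)) * ennreal (t ^ (a + b + 1) *
      ((cmod (pdl (replicate (Suc a) 0) f (y(0 := t))))\<^sup>2 + (cmod (pdl (replicate a 0) f (y(0 := t))))\<^sup>2)
        / (real (a + b) + 1)) \<partial>lborel) \<partial>PiM {1..<d} (\<lambda>_. lborel))"
    by (rule nn_integral_mono) (erule slice_wmoment_integrand_le[OF d sp])
  also have "\<dots> = (\<integral>\<^sup>+y. (\<integral>\<^sup>+t. H (y(0 := t)) \<partial>lborel) \<partial>PiM {1..<d} (\<lambda>_. lborel))"
    by (simp add: H_def)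
  also have "\<dots> = integral\<^sup>N (lebd d) H"
    by (rule nn_integral_lebd_slice[OF d H_meas, symmetric])
  also have "\<dots> = ennreal (1 / (real (a + b) + 1)) * (wmoment d f (Suc a) b + wmoment d f a (Suc b))"
    unfolding H_def by (rule nn_integral_wmoment_succ_sum[OF d sp])
  finally show ?thesis .
qed

lemma GS_schwartz_plus: "f \<in> GS d \<alpha> \<Longrightarrow> schwartz_plus d f"
  unfolding GS_def GS_A_def by (auto dest: bspec[of _ _ 1])

lemma GS_A_wmoment_bound:
  assumes d: "0 < d" and "\<alpha> \<le> 1" and f: "f \<in> GS_A d \<alpha> A"
  obtains C where "\<And>a b. wmoment d f a b \<le> ennreal (C\<^sup>2 * A ^ (2 * (a + b)) * real (a + b) ^ (a + b))"
proof -
  obtain C where C: "\<And>p k. wL2sq d p k f \<le> ennreal ((C * A ^ (mlen d p + mlen d k) * mpow d \<alpha> k * mpow d \<alpha> p)\<^sup>2)"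
    using f unfolding GS_A_def by blast
  have "wmoment d f a b \<le> ennreal (C\<^sup>2 * A ^ (2 * (a + b)) * real (a + b) ^ (a + b))" for a b
  proof -
    have "0 \<le> C\<^sup>2 * A ^ (2 * (a + b))"
      unfolding power_mult by simp
    have "(C * A ^ (a + b) * mpow d \<alpha> (first_index b) * mpow d \<alpha> (first_index a))\<^sup>2
        = C\<^sup>2 * A ^ (2 * (a + b)) * ((mpow d \<alpha> (first_index b))\<^sup>2 * (mpow d \<alpha> (first_index a))\<^sup>2)"
      by (simp add: power_mult_distrib mult.commute flip: power_mult)
    also have "\<dots> \<le> C\<^sup>2 * A ^ (2 * (a + b)) * (real (a + b) ^ b * real (a + b) ^ a)"
      using d \<open>\<alpha> \<le> 1\<close> \<open>0 \<le> C\<^sup>2 * A ^ (2 * (a + b))\<close>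
      by (intro mult_left_mono mult_mono mpow_first_index_sq_le) auto
    also have "real (a + b) ^ b * real (a + b) ^ a = real (a + b) ^ (a + b)"
      by (simp add: add.commute flip: power_add)
    finally have bound: "(C * A ^ (a + b) * mpow d \<alpha> (first_index b) * mpow d \<alpha> (first_index a))\<^sup>2
        \<le> C\<^sup>2 * A ^ (2 * (a + b)) * real (a + b) ^ (a + b)" .
    have "wmoment d f a b = wL2sq d (first_index a) (first_index b) f"
      by (simp add: wL2sq_first_index[OF d])
    also have "\<dots> \<le> ennreal ((C * A ^ (a + b) * mpow d \<alpha> (first_index b) * mpow d \<alpha> (first_index a))\<^sup>2)"
      using C[of "first_index a" "first_index b"] by (simp add: mlen_first_index[OF d])
    also have "\<dots> \<le> ennreal (C\<^sup>2 * A ^ (2 * (a + b)) * real (a + b) ^ (a + b))"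
      using bound by (rule ennreal_leI)
    finally show ?thesis .
  qed
  with that show ?thesis .
qed

lemma GS_wmoment_0_0:
  assumes d: "0 < d" and "\<alpha> \<le> 1" and f: "f \<in> GS d \<alpha>"
  shows "wmoment d f 0 0 = 0"
proof -
  define A :: real where "A = 1 / 4"
  have "A \<in> {0<..}"
    by (simp add: A_def)
  with f have fA: "f \<in> GS_A d \<alpha> A"
    unfolding GS_def by blast
  note sp = GS_schwartz_plus[OF f]
  obtain C where C: "\<And>a b. wmoment d f a b \<le> ennreal (C\<^sup>2 * A ^ (2 * (a + b)) * real (a + b) ^ (a + b))"
    using GS_A_wmoment_bound[OF d \<open>\<alpha> \<le> 1\<close> fA] by blast
  have "wmoment d f 0 0 \<le> ennreal (C\<^sup>2 * (3 / 8) ^ n)" for n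
  proof -
    have "wmoment d f 0 0 \<le> ennreal (C\<^sup>2 * A ^ (2 * n) * real n ^ n * 2 ^ n / fact n)"
    proof (rule origin_le_of_level_bound[OF wmoment_le_succ[OF d sp]])
      show "wmoment d f a b \<le> ennreal (C\<^sup>2 * A ^ (2 * n) * real n ^ n)" if "a + b = n" for a b
        using C[of a b] that by blast
      show "0 \<le> C\<^sup>2 * A ^ (2 * n) * real n ^ n"
        by (simp add: power_mult)
    qed
    also have "C\<^sup>2 * A ^ (2 * n) * real n ^ n * 2 ^ n / fact n \<le> C\<^sup>2 * (2 * A\<^sup>2 * exp 1) ^ n"
      by (rule level_bound_div_fact_le) simp
    also have "\<dots> \<le> C\<^sup>2 * (3 / 8) ^ n"
      using exp_le by (intro mult_left_mono power_mono) (simp_all add: A_def power2_eq_square)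
    finally show ?thesis
      by (simp add: ennreal_leI)
  qed
  moreover have "(\<lambda>n. ennreal (C\<^sup>2 * (3 / 8) ^ n)) \<longlonglongrightarrow> ennreal (C\<^sup>2 * 0)"
    by (intro tendsto_ennrealI tendsto_mult tendsto_const LIMSEQ_power_zero) simp
  ultimately have "wmoment d f 0 0 \<le> ennreal (C\<^sup>2 * 0)"
    using LIMSEQ_le_const by blast
  then show ?thesis
    by simp
qed

lemma zero_in_GS: "(\<lambda>_. 0) \<in> GS d \<alpha>"
proof -
  have pdl_zero: "pdl is (\<lambda>_. 0) = (\<lambda>_. 0)" for "is"
    by (induction "is") (auto simp: pd_def fun_eq_iff)
  then have "schwartz_plus d (\<lambda>_. 0)"
    unfolding schwartz_plus_def mpd_def by (auto intro!: exI[of _ "\<lambda>_. 0"] exI[of _ 0])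
  moreover have "wL2sq d p k (\<lambda>_. 0) = 0" for p k
    by (simp add: wL2sq_def mpd_def pdl_zero)
  ultimately show ?thesis
    by (simp add: GS_def GS_A_def)
qed

theorem theorem2p8:
  fixes d :: nat and \<alpha> :: real
  assumes "d \<ge> 1" and "0 < \<alpha>" and "\<alpha> \<le> 1"
  shows "(\<lambda>_. 0) \<in> GS d \<alpha> \<and> (\<forall>f\<in>GS d \<alpha>. \<forall>x\<in>Opos d. f x = 0)"
proof (intro conjI ballI zero_in_GS)
  fix f x assume f: "f \<in> GS d \<alpha>" and x: "x \<in> Opos d"
  have d: "0 < d"
    using assms(1) by simp
  have "continuous_on (Opos d) f"
    using schwartz_plus_continuous_on_pd0[OF d GS_schwartz_plus[OF f], of 0] by simp
  moreover have "(\<integral>\<^sup>+x. indicator (Opos d) x * ennreal ((norm (f x))\<^sup>2) \<partial>lebd d) = 0"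
    using GS_wmoment_0_0[OF d assms(3) f] by (simp add: wmoment_def)
  ultimately show "f x = 0"
    using x by (rule eq_0_of_nn_integral_Opos_eq_0)
qed

end
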